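(* Let $t\ge1$, $i\ge0$ integers, let $h:\mathbb{F}_{2^t}\to\mathbb{F}_{2^t}$ be any function, and let $f:\mathbb{F}_{2^t}\times\mathbb{F}_{2^t}\to\mathbb{F}_2$ be $f(x,y)=Tr_1^t(xy^{2^i}+h(y))$. Then $f$ is negabent if and only if $y\mapsto Tr_1^t(h(y))$ is a bent function on $\mathbb{F}_{2^t}$.
   Context: $Tr_1^t$ is the absolute trace of $\mathbb{F}_{2^t}$. Fix a self-dual basis $\{\alpha_1,\dots,\alpha_t\}$ of $\mathbb{F}_{2^t}$ over $\mathbb{F}_2$ ($Tr_1^t(\alpha_i\alpha_j)=\delta_{ij}$) and identify $\mathbb{F}_{2^t}\times\mathbb{F}_{2^t}$ with $\mathbb{F}_2^{2t}$ via coordinates; let $wt(x,y)$ be the number of nonzero coordinates. $g:\mathbb{F}_{2^t}\times\mathbb{F}_{2^t}\to\mathbb{F}_2$ is negabent if $\left|\sum_{(x,y)}(-1)^{g(x,y)+Tr_1^t(ax)+Tr_1^t(by)}\,\mathrm{i}^{wt(x,y)}\right|=2^{t}$ for all $(a,b)$ ($\mathrm{i}=\sqrt{-1}$). A function $u:\mathbb{F}_{2^t}\to\mathbb{F}_2$ is bent if $\left|\sum_{y}(-1)^{u(y)+Tr_1^t(\mu y)}\right|=2^{t/2}$ for all $\mu\in\mathbb{F}_{2^t}$ (equivalently, $\sum_y(-1)^{u(y)+u(y+b)}=0$ for all $b\neq0$). *)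

theory Defs
  imports Complex_Main
begin

text \<open>The field F_(2^t) is modelled by a finite field type 'a with CARD('a) = 2^t.
  F_2 is modelled by bool (True = 1).\<close>

definition tr :: "nat \<Rightarrow> 'a::field \<Rightarrow> 'a" where
  "tr t x = (\<Sum>k<t. x ^ (2 ^ k))"

definition Tr :: "nat \<Rightarrow> 'a::field \<Rightarrow> bool" where
  "Tr t x = (tr t x \<noteq> 0)"

definition self_dual_basis :: "nat \<Rightarrow> (nat \<Rightarrow> 'a::field) \<Rightarrow> bool" where
  "self_dual_basis t \<alpha> \<longleftrightarrow>
     (\<forall>i<t. \<forall>j<t. tr t (\<alpha> i * \<alpha> j) = (if i = j then 1 else 0))"

definition coords :: "nat \<Rightarrow> (nat \<Rightarrow> 'a::field) \<Rightarrow> 'a \<Rightarrow> nat \<Rightarrow> bool" where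
  "coords t \<alpha> x = (THE c. (\<forall>i\<ge>t. \<not> c i) \<and> x = (\<Sum>i<t. if c i then \<alpha> i else 0))"

definition wt :: "nat \<Rightarrow> (nat \<Rightarrow> 'a::field) \<Rightarrow> 'a \<Rightarrow> 'a \<Rightarrow> nat" where
  "wt t \<alpha> x y = card {i. i < t \<and> coords t \<alpha> x i} + card {i. i < t \<and> coords t \<alpha> y i}"

definition sgn2 :: "bool \<Rightarrow> complex" where
  "sgn2 b = (if b then -1 else 1)"

definition negabent :: "nat \<Rightarrow> (nat \<Rightarrow> 'a::{field,finite}) \<Rightarrow> ('a \<Rightarrow> 'a \<Rightarrow> bool) \<Rightarrow> bool" where
  "negabent t \<alpha> g \<longleftrightarrow>
     (\<forall>a b. cmod (\<Sum>(x,y)\<in>UNIV. sgn2 (g x y) * sgn2 (Tr t (a * x)) * sgn2 (Tr t (b * y))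
                                 * \<i> ^ wt t \<alpha> x y) = 2 ^ t)"

definition bent :: "nat \<Rightarrow> ('a::{field,finite} \<Rightarrow> bool) \<Rightarrow> bool" where
  "bent t u \<longleftrightarrow>
     (\<forall>\<mu>. cmod (\<Sum>y\<in>UNIV. sgn2 (u y) * sgn2 (Tr t (\<mu> * y))) = 2 powr (real t / 2))"

end

theory Submission
  imports Defs "HOL-Computational_Algebra.Polynomial"
begin

text \<open>In coordinates with respect to a self-dual basis, Tr(x c) is the parity of the common
  support of x and c, so the character sum over x of (-1)^Tr(x c) \<i>^wt(x) factors over the
  coordinates into (1 + \<i>)^t (-\<i>)^wt(c). Summing out x therefore turns the negabent transform of
  f at (a, b) into (1 + \<i>)^t times the Walsh transform at b of the unimodular function
  F_a(y) = (-1)^Tr(h y) \<i>^wt(y) (-\<i>)^wt(y^(2^i) + a). A unimodular function has a flat Walsh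
  spectrum exactly when its autocorrelation vanishes off 0, and the autocorrelation of F_a at e is
  a unimodular multiple of that of (-1)^Tr(h y): the identity
  \<i>^|A| (-\<i>)^|A \<triangle> B| = (-\<i>)^|B| (-1)^|A \<inter> B| collapses the powers of \<i>, and the signs it
  leaves behind cancel because the trace is invariant under the Frobenius map.\<close>

lemma power_card_UNIV_eq_self:
  fixes x :: "'a::{field,finite}"
  shows "x ^ card (UNIV :: 'a set) = x"
proof (cases "x = 0")
  case True
  then show ?thesis by (simp add: finite_UNIV_card_ge_0)
next
  case False
  let ?U = "UNIV - {0::'a}"
  have "bij_betw ((*) x) ?U ?U"
    by (rule bij_betw_byWitness[where f'="(*) (inverse x)"]) (auto simp: False)
  from prod.reindex_bij_betw[OF this, of "\<lambda>y. y"]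
  have "x ^ card ?U * (\<Prod>y\<in>?U. y) = 1 * (\<Prod>y\<in>?U. y)"
    by (simp add: prod.distrib)
  then have "x ^ card ?U = 1"
    by (rule mult_right_cancel[THEN iffD1, rotated]) simp
  moreover have "card (UNIV :: 'a set) = Suc (card ?U)"
    using finite_UNIV_card_ge_0[where 'a='a] by (simp add: card_Diff_singleton)
  ultimately show ?thesis
    by (simp only: power_Suc2 mult_1_left)
qed

lemma of_nat_card_UNIV_eq_0: "of_nat (card (UNIV :: 'a set)) = (0::'a::{ring_1,finite})"
proof -
  have "bij_betw (\<lambda>y. y + 1) (UNIV::'a set) UNIV"
    by (rule bij_betw_byWitness[where f'="\<lambda>y. y - 1"]) auto
  from sum.reindex_bij_betw[OF this, of "\<lambda>y. y"]
  have "(\<Sum>y\<in>UNIV. y + (1::'a)) = (\<Sum>y\<in>UNIV. y)"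
    by simp
  then show ?thesis by (simp add: sum.distrib)
qed

lemma sgn2_xor: "sgn2 (P \<noteq> Q) = sgn2 P * sgn2 Q"
  by (simp add: sgn2_def)

lemma sgn2_mult_self [simp]: "sgn2 P * sgn2 P = 1"
  by (simp add: sgn2_def)

lemma cnj_sgn2 [simp]: "cnj (sgn2 P) = sgn2 P"
  by (simp add: sgn2_def)

lemma norm_sgn2 [simp]: "cmod (sgn2 P) = 1"
  by (simp add: sgn2_def)

lemma sgn2_odd: "sgn2 (odd n) = (-1) ^ n"
  by (simp add: sgn2_def)

lemma norm_eq_sqrt_power_iff:
  "cmod w = 2 powr (real n / 2) \<longleftrightarrow> w * cnj w = 2 ^ n"
proof -
  have "(2 powr (real n / 2)) ^ 2 = (2::real) ^ n"
    by (simp add: powr_realpow[symmetric] powr_powr[symmetric] power2_eq_square powr_add[symmetric])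
  then have "cmod w = 2 powr (real n / 2) \<longleftrightarrow> (cmod w)\<^sup>2 = 2 ^ n"
    by (metis norm_ge_zero powr_ge_zero power2_eq_iff_nonneg)
  also have "\<dots> \<longleftrightarrow> complex_of_real ((cmod w)\<^sup>2) = complex_of_real (2 ^ n)"
    by (simp only: of_real_eq_iff)
  also have "\<dots> \<longleftrightarrow> w * cnj w = 2 ^ n"
    by (simp only: complex_norm_square[symmetric] of_real_power of_real_numeral)
  finally show ?thesis .
qed

lemma power_i_card_sym_diff:
  assumes "finite A" "finite B"
  shows "\<i> ^ card A * (-\<i>) ^ card (sym_diff A B) = (-\<i>) ^ card B * (-1) ^ card (A \<inter> B)"
proof -
  let ?a = "card A" and ?b = "card B" and ?d = "card (sym_diff A B)" and ?m = "card (A \<inter> B)"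
  have "?d = card (A - B) + card (B - A)"
    using assms by (intro card_Un_disjoint) auto
  moreover have "?a = card (A - B) + ?m"
    using assms by (metis card_Int_Diff Int_commute add.commute)
  moreover have "?b = card (B - A) + ?m"
    using assms by (metis card_Int_Diff Int_commute add.commute)
  ultimately have card_eq: "?d + 2 * ?m = ?a + ?b"
    by linarith
  have "\<i> ^ ?a * (-\<i>) ^ ?d * (-1) ^ ?m = \<i> ^ ?a * ((-\<i>) ^ ?d * (-\<i>) ^ (2 * ?m))"
    by (simp add: power_mult)
  also have "\<dots> = \<i> ^ ?a * (-\<i>) ^ (?a + ?b)"
    by (simp only: card_eq flip: power_add)
  also have "\<dots> = (\<i> * -\<i>) ^ ?a * (-\<i>) ^ ?b"
    by (simp only: power_add power_mult_distrib mult.assoc)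
  finally have key: "\<i> ^ ?a * (-\<i>) ^ ?d * (-1) ^ ?m = (-\<i>) ^ ?b"
    by simp
  have "(-1::complex) ^ ?m * (-1) ^ ?m = 1"
    by (simp flip: power_mult_distrib)
  then have "\<i> ^ ?a * (-\<i>) ^ ?d = \<i> ^ ?a * (-\<i>) ^ ?d * ((-1) ^ ?m * (-1) ^ ?m)"
    by simp
  also have "\<dots> = (-\<i>) ^ ?b * (-1) ^ ?m"
    by (simp only: key mult.assoc[symmetric])
  finally show ?thesis .
qed

lemma prod_i_or_minus_i:
  assumes "finite S"
  shows "(\<Prod>k\<in>S. if k \<in> C then -\<i> else \<i>) = (-1) ^ card (S \<inter> C) * \<i> ^ card S"
proof -
  have "card S = card (S \<inter> C) + card (S - C)"
    using assms by (metis card_Int_Diff)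
  then have "(-1) ^ card (S \<inter> C) * \<i> ^ card S = (-\<i>) ^ card (S \<inter> C) * \<i> ^ card (S - C)"
    by (simp add: power_add mult.assoc flip: power_mult_distrib)
  then show ?thesis
    using assms by (simp add: prod.If_cases Diff_eq)
qed

text \<open>Expanding the product of the factors 1 + (\<plusminus>\<i>) over I.\<close>
lemma sum_Pow_sign_power_i:
  assumes "finite I" "C \<subseteq> I"
  shows "(\<Sum>S\<in>Pow I. (-1) ^ card (S \<inter> C) * \<i> ^ card S) = (1 + \<i>) ^ card I * (-\<i>) ^ card C"
proof -
  have fin: "finite S" if "S \<in> Pow I" for S
    using that assms(1) finite_subset by blast
  have "(\<Sum>S\<in>Pow I. (-1) ^ card (S \<inter> C) * \<i> ^ card S)
      = (\<Sum>S\<in>Pow I. (\<Prod>k\<in>S. if k \<in> C then -\<i> else \<i>) * (\<Prod>k\<in>I - S. 1))"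
    by (intro sum.cong refl) (simp add: prod_i_or_minus_i fin)
  also have "\<dots> = (\<Prod>k\<in>I. (if k \<in> C then -\<i> else \<i>) + 1)"
    by (rule prod_add[symmetric]) (rule assms(1))
  also have "\<dots> = (\<Prod>k\<in>I. if k \<in> C then (1 + \<i>) * -\<i> else 1 + \<i>)"
    by (intro prod.cong refl) (simp add: algebra_simps)
  also have "\<dots> = ((1 + \<i>) * -\<i>) ^ card C * (1 + \<i>) ^ card (I - C)"
    using assms by (simp add: prod.If_cases Diff_eq Int_absorb1 inf.absorb2)
  also have "\<dots> = (1 + \<i>) ^ (card C + card (I - C)) * (-\<i>) ^ card C"
    by (simp only: power_add power_mult_distrib mult_ac)
  also have "card C + card (I - C) = card I"
    using assms by (metis card_Diff_subset card_mono finite_subset le_add_diff_inverse)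
  finally show ?thesis .
qed

lemma norm_one_plus_i_power: "cmod ((1 + \<i>) ^ n) = 2 powr (real n / 2)"
proof -
  have "cmod (1 + \<i>) = 2 powr (1 / 2)"
    by (simp add: cmod_def powr_half_sqrt)
  then show ?thesis
    by (simp add: norm_power powr_realpow[symmetric] powr_powr)
qed

lemma norm_mult_one_plus_i_power_eq_iff:
  "cmod ((1 + \<i>) ^ n * w) = 2 ^ n \<longleftrightarrow> w * cnj w = 2 ^ n"
proof -
  have "(2::real) ^ n = 2 powr (real n / 2) * 2 powr (real n / 2)"
    by (simp add: powr_realpow[symmetric] flip: powr_add)
  then have "cmod ((1 + \<i>) ^ n * w) = 2 ^ n \<longleftrightarrow> cmod w = 2 powr (real n / 2)"
    by (simp add: norm_mult norm_one_plus_i_power)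
  then show ?thesis
    by (simp add: norm_eq_sqrt_power_iff)
qed

definition walsh :: "nat \<Rightarrow> ('a::{field,finite} \<Rightarrow> complex) \<Rightarrow> 'a \<Rightarrow> complex" where
  "walsh t F b = (\<Sum>y\<in>UNIV. F y * sgn2 (Tr t (b * y)))"

definition autocorrelation :: "('a::{field,finite} \<Rightarrow> complex) \<Rightarrow> 'a \<Rightarrow> complex" where
  "autocorrelation F e = (\<Sum>y\<in>UNIV. F y * cnj (F (y + e)))"

text \<open>For a self-dual basis \<alpha>, the k-th coordinate of x is Tr(x \<alpha>_k).\<close>
definition coord_support :: "nat \<Rightarrow> (nat \<Rightarrow> 'a::field) \<Rightarrow> 'a \<Rightarrow> nat set" where
  "coord_support t \<alpha> x = {k. k < t \<and> Tr t (x * \<alpha> k)}"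

text \<open>Summing out x in the negabent transform of Tr(x y^(2^k)) + u(y) at (a, b) leaves the
  Walsh transform at b of this function of y.\<close>
definition twisted :: "nat \<Rightarrow> (nat \<Rightarrow> 'a::field) \<Rightarrow> ('a \<Rightarrow> bool) \<Rightarrow> nat \<Rightarrow> 'a \<Rightarrow> 'a \<Rightarrow> complex" where
  "twisted t \<alpha> u k a y = sgn2 (u y) * \<i> ^ card (coord_support t \<alpha> y)
     * (-\<i>) ^ card (coord_support t \<alpha> (y ^ (2 ^ k) + a))"

lemma norm_twisted [simp]: "cmod (twisted t \<alpha> u k a y) = 1"
  by (simp add: twisted_def norm_mult norm_power)

context
  fixes t :: nat
  assumes card_UNIV: "card (UNIV :: 'a::{field,finite} set) = 2 ^ t"
begin

lemma two_eq_zero: "(2::'a) = 0"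
proof -
  have "(2::'a) ^ t = 0"
    using of_nat_card_UNIV_eq_0[where 'a='a] by (simp add: card_UNIV)
  then show ?thesis by simp
qed

lemma add_self_eq_zero [simp]: "(x::'a) + x = 0"
  by (metis mult_2 mult_zero_left two_eq_zero)

lemma minus_eq_self [simp]: "- (x::'a) = x"
  using add_self_eq_zero add.inverse_unique by blast

lemma power_two_power_add: "((x::'a) + y) ^ (2 ^ k) = x ^ (2 ^ k) + y ^ (2 ^ k)"
proof (induction k)
  case 0
  then show ?case by simp
next
  case (Suc k)
  have "(x + y) ^ (2 ^ Suc k) = ((x + y) ^ (2 ^ k))\<^sup>2"
    by (simp add: power_mult[symmetric] mult.commute)
  also have "\<dots> = (x ^ (2 ^ k))\<^sup>2 + (y ^ (2 ^ k))\<^sup>2"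
    unfolding Suc power2_sum by (simp add: two_eq_zero)
  finally show ?case
    by (simp add: power_mult[symmetric] mult.commute)
qed

lemma power_two_power_sum: "finite A \<Longrightarrow> (\<Sum>i\<in>A. f i) ^ (2 ^ k) = (\<Sum>i\<in>A. (f i :: 'a) ^ (2 ^ k))"
  by (induction A rule: finite_induct) (simp_all add: power_two_power_add)

lemma power_two_power_self: "(x::'a) ^ (2 ^ t) = x"
  using power_card_UNIV_eq_self[of x] by (simp add: card_UNIV)

lemma tr_add: "tr t ((x::'a) + y) = tr t x + tr t y"
  unfolding tr_def by (simp add: power_two_power_add sum.distrib)

lemma tr_zero [simp]: "tr t (0::'a) = 0"
  using tr_add[of 0 0] by simp

lemma tr_sum: "finite A \<Longrightarrow> tr t (\<Sum>i\<in>A. f i) = (\<Sum>i\<in>A. tr t (f i :: 'a))"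
  by (induction A rule: finite_induct) (simp_all add: tr_add)

lemma tr_square: "tr t ((x::'a)\<^sup>2) = tr t x"
proof -
  have "tr t (x\<^sup>2) = (\<Sum>k<t. x ^ (2 ^ Suc k))"
    unfolding tr_def by (intro sum.cong refl) (simp add: power_mult[symmetric] mult.commute)
  also have "\<dots> = (\<Sum>k<Suc t. x ^ (2 ^ k)) - x"
    by (subst sum.lessThan_Suc_shift) (simp add: two_eq_zero)
  also have "\<dots> = tr t x"
    by (simp add: tr_def power_two_power_self two_eq_zero)
  finally show ?thesis .
qed

lemma tr_power_two_power: "tr t ((x::'a) ^ (2 ^ k)) = tr t x"
proof (induction k)
  case 0
  then show ?case by simp
next
  case (Suc k)
  have "x ^ (2 ^ Suc k) = (x ^ (2 ^ k))\<^sup>2"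
    by (simp add: power_mult[symmetric] mult.commute)
  then show ?case
    using Suc by (simp add: tr_square)
qed

lemma tr_eq_of_bool_Tr: "tr t (x::'a) = of_bool (Tr t x)"
proof -
  have "(tr t x) ^ (2 ^ 1) = (\<Sum>k<t. (x ^ (2 ^ k)) ^ (2 ^ 1))"
    unfolding tr_def by (rule power_two_power_sum) simp
  then have "(tr t x)\<^sup>2 = (\<Sum>k<t. (x\<^sup>2) ^ (2 ^ k))"
    by (simp add: power_mult[symmetric] mult.commute)
  also have "\<dots> = tr t x"
    using tr_square by (simp add: tr_def)
  finally show ?thesis
    by (auto simp: Tr_def power2_eq_square)
qed

lemma Tr_add: "Tr t ((x::'a) + y) \<longleftrightarrow> Tr t x \<noteq> Tr t y"
  using tr_add[of x y] two_eq_zero by (cases "Tr t x"; cases "Tr t y") (simp_all add: tr_eq_of_bool_Tr)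

lemma Tr_zero [simp]: "\<not> Tr t (0::'a)"
  by (simp add: Tr_def)

lemma Tr_power_two_power: "Tr t ((x::'a) ^ (2 ^ k)) = Tr t x"
  by (simp add: Tr_def tr_power_two_power)

text \<open>The trace is a polynomial of degree 2^(t-1) < 2^t, so it cannot vanish everywhere.\<close>
lemma ex_Tr: "\<exists>c::'a. Tr t c"
proof -
  have "2 \<le> card (UNIV :: 'a set)"
    using card_mono[of UNIV "{0::'a, 1}"] by simp
  then have "t \<noteq> 0"
    using card_UNIV by (cases t) auto
  define p :: "'a poly" where "p = (\<Sum>k<t. monom 1 (2 ^ k))"
  have poly_p: "poly p x = tr t x" for x
    by (simp add: p_def tr_def poly_sum poly_monom)
  have "coeff p (2 ^ (t - 1)) = 1"
    using \<open>t \<noteq> 0\<close> by (simp add: p_def coeff_sum power_inject_exp)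
  then have "p \<noteq> 0"
    by auto
  have "degree p \<le> 2 ^ (t - 1)"
    unfolding p_def
    by (intro degree_sum_le order.trans[OF degree_monom_le] power_increasing) auto
  then have "card {x::'a. tr t x = 0} \<le> 2 ^ (t - 1)"
    using card_poly_roots_bound[OF \<open>p \<noteq> 0\<close>] unfolding poly_p by linarith
  moreover have "(2::nat) ^ (t - 1) < 2 ^ t"
    using \<open>t \<noteq> 0\<close> by simp
  ultimately have "card {x::'a. tr t x = 0} < card (UNIV :: 'a set)"
    using card_UNIV by linarith
  then have "{x::'a. tr t x = 0} \<noteq> (UNIV :: 'a set)"
    by auto
  then show ?thesis
    by (auto simp: Tr_def)
qed

lemma sgn2_Tr_mult_add: "sgn2 (Tr t (b * (y + e))) = sgn2 (Tr t (b * y)) * sgn2 (Tr t (b * (e::'a)))"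
  by (simp only: distrib_left Tr_add sgn2_xor)

lemma sum_sgn2_Tr_mult: "(\<Sum>b\<in>UNIV. sgn2 (Tr t (b * (e::'a)))) = (if e = 0 then 2 ^ t else 0)"
proof (cases "e = 0")
  case True
  then show ?thesis
    by (simp add: sgn2_def card_UNIV)
next
  case False
  obtain c :: 'a where "Tr t c"
    using ex_Tr by blast
  then have flip: "sgn2 (Tr t ((b + c / e) * e)) = - sgn2 (Tr t (b * e))" for b
    using False by (simp add: distrib_right Tr_add sgn2_def)
  have "bij (\<lambda>b. b + c / e)"
    by (rule bij_betw_byWitness[where f'="\<lambda>b. b + c / e"]) (auto simp: add.assoc)
  from sum.reindex_bij_betw[OF this, of "\<lambda>b. sgn2 (Tr t (b * e))"]
  have "(\<Sum>b\<in>UNIV. sgn2 (Tr t (b * e))) = - (\<Sum>b\<in>UNIV. sgn2 (Tr t (b * e)))"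
    by (simp add: flip sum_negf)
  then show ?thesis
    using False by simp
qed

lemma walsh_mult_cnj:
  "walsh t F b * cnj (walsh t F b) = (\<Sum>e\<in>UNIV. sgn2 (Tr t (b * e)) * autocorrelation F (e::'a))"
proof -
  have shift: "bij ((+) y)" for y :: 'a
    by (rule bij_betw_byWitness[where f'="(+) y"]) (auto simp: add.assoc[symmetric])
  have "walsh t F b * cnj (walsh t F b)
      = (\<Sum>y\<in>UNIV. \<Sum>z\<in>UNIV. F y * sgn2 (Tr t (b * y)) * cnj (F z * sgn2 (Tr t (b * z))))"
    unfolding walsh_def cnj_sum sum_product ..
  also have "\<dots> = (\<Sum>y\<in>UNIV. \<Sum>e\<in>UNIV. F y * sgn2 (Tr t (b * y)) * cnj (F (y + e) * sgn2 (Tr t (b * (y + e)))))"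
    by (intro sum.cong refl sum.reindex_bij_betw[OF shift, symmetric])
  also have "\<dots> = (\<Sum>y\<in>UNIV. \<Sum>e\<in>UNIV. sgn2 (Tr t (b * e)) * (F y * cnj (F (y + e))))"
  proof (intro sum.cong refl)
    fix y e
    have "F y * sgn2 (Tr t (b * y)) * cnj (F (y + e) * sgn2 (Tr t (b * (y + e))))
        = (sgn2 (Tr t (b * y)) * sgn2 (Tr t (b * y))) * sgn2 (Tr t (b * e)) * (F y * cnj (F (y + e)))"
      by (simp only: sgn2_Tr_mult_add complex_cnj_mult cnj_sgn2 mult_ac)
    then show "F y * sgn2 (Tr t (b * y)) * cnj (F (y + e) * sgn2 (Tr t (b * (y + e))))
        = sgn2 (Tr t (b * e)) * (F y * cnj (F (y + e)))"
      by simp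
  qed
  also have "\<dots> = (\<Sum>e\<in>UNIV. sgn2 (Tr t (b * e)) * autocorrelation F e)"
    unfolding autocorrelation_def sum_distrib_left by (rule sum.swap)
  finally show ?thesis .
qed

text \<open>Wiener--Khinchin: the power spectrum is the Walsh transform of the autocorrelation,
  which for unimodular F equals 2^t at 0; now invert the transform.\<close>
lemma flat_walsh_iff_autocorrelation_zero:
  assumes unimodular: "\<And>y. cmod (F y) = 1"
  shows "(\<forall>b. walsh t F b * cnj (walsh t F b) = 2 ^ t)
    \<longleftrightarrow> (\<forall>e::'a. e \<noteq> 0 \<longrightarrow> autocorrelation F e = 0)"
proof
  assume vanish: "\<forall>e::'a. e \<noteq> 0 \<longrightarrow> autocorrelation F e = 0"
  have "autocorrelation F 0 = 2 ^ t"
    using unimodular by (simp add: autocorrelation_def complex_norm_square[symmetric] card_UNIV)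
  then show "\<forall>b. walsh t F b * cnj (walsh t F b) = 2 ^ t"
    using vanish by (simp add: walsh_mult_cnj sum.mono_neutral_right[of UNIV "{0}"] sgn2_def)
next
  assume flat: "\<forall>b. walsh t F b * cnj (walsh t F b) = 2 ^ t"
  show "\<forall>e::'a. e \<noteq> 0 \<longrightarrow> autocorrelation F e = 0"
  proof (intro allI impI)
    fix d :: 'a
    assume "d \<noteq> 0"
    have "0 = (\<Sum>b\<in>UNIV. sgn2 (Tr t (b * d)) * (walsh t F b * cnj (walsh t F b)))"
      using flat \<open>d \<noteq> 0\<close> by (simp add: sum_sgn2_Tr_mult flip: sum_distrib_right)
    also have "\<dots> = (\<Sum>b\<in>UNIV. \<Sum>e\<in>UNIV. autocorrelation F e * sgn2 (Tr t (b * (e + d))))"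
      by (simp add: walsh_mult_cnj sum_distrib_left sgn2_Tr_mult_add mult_ac)
    also have "\<dots> = (\<Sum>e\<in>UNIV. autocorrelation F e * (\<Sum>b\<in>UNIV. sgn2 (Tr t (b * (e + d)))))"
      by (subst sum.swap) (simp add: sum_distrib_left)
    also have "\<dots> = (\<Sum>e\<in>UNIV. if e = d then autocorrelation F e * 2 ^ t else 0)"
      by (intro sum.cong refl) (simp add: sum_sgn2_Tr_mult eq_neg_iff_add_eq_0[symmetric])
    also have "\<dots> = autocorrelation F d * 2 ^ t"
      by simp
    finally show "autocorrelation F d = 0"
      by simp
  qed
qed

lemma bent_iff_autocorrelation_zero:
  "bent t (u :: 'a \<Rightarrow> bool) \<longleftrightarrow> (\<forall>e. e \<noteq> 0 \<longrightarrow> autocorrelation (\<lambda>y. sgn2 (u y)) e = 0)"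
  unfolding bent_def norm_eq_sqrt_power_iff
  by (simp add: flat_walsh_iff_autocorrelation_zero[symmetric] walsh_def)

lemma of_nat_eq_of_bool_odd: "(of_nat n :: 'a) = of_bool (odd n)"
  by (induction n) auto

lemma coord_support_add:
  "coord_support t \<alpha> ((x::'a) + y) = sym_diff (coord_support t \<alpha> x) (coord_support t \<alpha> y)"
  by (auto simp: coord_support_def distrib_right Tr_add)

context
  fixes \<alpha> :: "nat \<Rightarrow> 'a"
  assumes self_dual: "self_dual_basis t \<alpha>"
begin

lemma Tr_sum_basis_mult_basis:
  assumes "S \<subseteq> {..<t}" "j < t"
  shows "Tr t ((\<Sum>k\<in>S. \<alpha> k) * \<alpha> j) \<longleftrightarrow> j \<in> S"
proof -
  have "finite S"
    using assms(1) finite_subset by blast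
  then have "tr t ((\<Sum>k\<in>S. \<alpha> k) * \<alpha> j) = (\<Sum>k\<in>S. tr t (\<alpha> k * \<alpha> j))"
    by (simp add: sum_distrib_right tr_sum)
  also have "\<dots> = (\<Sum>k\<in>S. if k = j then 1 else 0)"
    using self_dual assms unfolding self_dual_basis_def by (intro sum.cong refl) auto
  finally show ?thesis
    using \<open>finite S\<close> by (simp add: Tr_def)
qed

lemma coord_support_sum_basis:
  "S \<subseteq> {..<t} \<Longrightarrow> coord_support t \<alpha> (\<Sum>k\<in>S. \<alpha> k) = S"
  by (auto simp: coord_support_def Tr_sum_basis_mult_basis subset_iff)

lemma bij_betw_sum_basis: "bij_betw (\<lambda>S. \<Sum>k\<in>S. \<alpha> k) (Pow {..<t}) UNIV"
proof -
  have inj: "inj_on (\<lambda>S. \<Sum>k\<in>S. \<alpha> k) (Pow {..<t})"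
    by (rule inj_on_inverseI[where g="coord_support t \<alpha>"]) (simp add: coord_support_sum_basis)
  then have "card ((\<lambda>S. \<Sum>k\<in>S. \<alpha> k) ` Pow {..<t}) = card (UNIV :: 'a set)"
    by (simp add: card_image card_Pow card_UNIV)
  then have "(\<lambda>S. \<Sum>k\<in>S. \<alpha> k) ` Pow {..<t} = UNIV"
    by (intro card_subset_eq) auto
  with inj show ?thesis
    by (simp add: bij_betw_def)
qed

lemma sum_basis_coord_support: "(\<Sum>k\<in>coord_support t \<alpha> x. \<alpha> k) = x"
proof -
  obtain S where "S \<subseteq> {..<t}" "x = (\<Sum>k\<in>S. \<alpha> k)"
    using bij_betw_sum_basis unfolding bij_betw_def by blast
  then show ?thesis
    by (simp add: coord_support_sum_basis)
qed

lemma coords_eq_coord_support: "coords t \<alpha> x = (\<lambda>k. k \<in> coord_support t \<alpha> x)"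
  unfolding coords_def
proof (rule the_equality)
  have "coord_support t \<alpha> x \<subseteq> {..<t}"
    by (auto simp: coord_support_def)
  then show "(\<forall>i\<ge>t. i \<notin> coord_support t \<alpha> x)
      \<and> x = (\<Sum>i<t. if i \<in> coord_support t \<alpha> x then \<alpha> i else 0)"
    by (auto simp: sum.If_cases Int_absorb1 sum_basis_coord_support)
next
  fix c
  assume c: "(\<forall>i\<ge>t. \<not> c i) \<and> x = (\<Sum>i<t. if c i then \<alpha> i else 0)"
  then have "x = (\<Sum>k\<in>{i. i < t \<and> c i}. \<alpha> k)"
    by (simp add: sum.If_cases lessThan_def Collect_conj_eq Int_commute)
  then have "coord_support t \<alpha> x = {i. i < t \<and> c i}"
    by (simp add: coord_support_sum_basis subset_eq)
  then show "c = (\<lambda>k. k \<in> coord_support t \<alpha> x)"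
    using c by (auto simp: fun_eq_iff)
qed

lemma wt_eq_card_coord_support:
  "wt t \<alpha> x y = card (coord_support t \<alpha> x) + card (coord_support t \<alpha> y)"
  by (simp add: wt_def coords_eq_coord_support coord_support_def)

lemma Tr_mult_iff_odd_card:
  "Tr t (x * c) \<longleftrightarrow> odd (card (coord_support t \<alpha> x \<inter> coord_support t \<alpha> c))"
proof -
  let ?X = "coord_support t \<alpha> x" and ?C = "coord_support t \<alpha> c"
  have "finite ?X"
    by (simp add: coord_support_def)
  have "tr t (x * c) = (\<Sum>k\<in>?X. tr t (\<alpha> k * c))"
    by (subst (1) sum_basis_coord_support[symmetric])
       (simp add: sum_distrib_right tr_sum \<open>finite ?X\<close>)
  also have "\<dots> = (\<Sum>k\<in>?X. of_bool (k \<in> ?C))"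
    by (intro sum.cong refl) (auto simp: tr_eq_of_bool_Tr coord_support_def mult.commute)
  also have "\<dots> = of_nat (card (?X \<inter> ?C))"
    by (simp add: \<open>finite ?X\<close>)
  finally show ?thesis
    by (simp add: Tr_def of_nat_eq_of_bool_odd)
qed

lemma sum_sgn2_Tr_mult_power_i:
  "(\<Sum>x\<in>UNIV. sgn2 (Tr t (x * c)) * \<i> ^ card (coord_support t \<alpha> x))
    = (1 + \<i>) ^ t * (-\<i>) ^ card (coord_support t \<alpha> c)"
proof -
  have C: "coord_support t \<alpha> c \<subseteq> {..<t}"
    by (auto simp: coord_support_def)
  have "(\<Sum>x\<in>UNIV. sgn2 (Tr t (x * c)) * \<i> ^ card (coord_support t \<alpha> x))
      = (\<Sum>S\<in>Pow {..<t}. (-1) ^ card (S \<inter> coord_support t \<alpha> c) * \<i> ^ card S)"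
    by (subst sum.reindex_bij_betw[OF bij_betw_sum_basis, symmetric])
       (intro sum.cong refl, simp add: Tr_mult_iff_odd_card coord_support_sum_basis sgn2_odd)
  also have "\<dots> = (1 + \<i>) ^ t * (-\<i>) ^ card (coord_support t \<alpha> c)"
    using sum_Pow_sign_power_i[OF finite_lessThan C] by simp
  finally show ?thesis .
qed

lemma power_i_coord_support_add:
  "\<i> ^ card (coord_support t \<alpha> y) * (-\<i>) ^ card (coord_support t \<alpha> (y + e))
    = (-\<i>) ^ card (coord_support t \<alpha> e) * sgn2 (Tr t (y * e))"
  unfolding coord_support_add Tr_mult_iff_odd_card sgn2_odd
  by (rule power_i_card_sym_diff) (simp_all add: coord_support_def)

lemma negabent_sum_eq_walsh_twisted:
  "(\<Sum>(x, y)\<in>UNIV. sgn2 (Tr t (x * y ^ (2 ^ k)) \<noteq> u y) * sgn2 (Tr t (a * x))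
      * sgn2 (Tr t (b * y)) * \<i> ^ wt t \<alpha> x y)
    = (1 + \<i>) ^ t * walsh t (twisted t \<alpha> u k a) b"
proof -
  let ?cs = "coord_support t \<alpha>"
  have split: "sgn2 (Tr t (x * y ^ (2 ^ k)) \<noteq> u y) * sgn2 (Tr t (a * x))
      * sgn2 (Tr t (b * y)) * \<i> ^ wt t \<alpha> x y
    = (sgn2 (u y) * sgn2 (Tr t (b * y)) * \<i> ^ card (?cs y))
      * (sgn2 (Tr t (x * (y ^ (2 ^ k) + a))) * \<i> ^ card (?cs x))" for x y
  proof -
    have "sgn2 (Tr t (x * (y ^ (2 ^ k) + a))) = sgn2 (Tr t (x * y ^ (2 ^ k))) * sgn2 (Tr t (a * x))"
      by (simp only: distrib_left Tr_add sgn2_xor mult.commute[of x a])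
    then show ?thesis
      by (simp only: sgn2_xor wt_eq_card_coord_support power_add mult_ac)
  qed
  have "(\<Sum>(x, y)\<in>UNIV. sgn2 (Tr t (x * y ^ (2 ^ k)) \<noteq> u y) * sgn2 (Tr t (a * x))
      * sgn2 (Tr t (b * y)) * \<i> ^ wt t \<alpha> x y)
    = (\<Sum>y\<in>UNIV. (sgn2 (u y) * sgn2 (Tr t (b * y)) * \<i> ^ card (?cs y))
      * (\<Sum>x\<in>UNIV. sgn2 (Tr t (x * (y ^ (2 ^ k) + a))) * \<i> ^ card (?cs x)))"
    unfolding split sum_distrib_left
    by (subst sum.swap) (simp add: sum.cartesian_product flip: UNIV_Times_UNIV)
  also have "\<dots> = (1 + \<i>) ^ t * walsh t (twisted t \<alpha> u k a) b"
    unfolding sum_sgn2_Tr_mult_power_i walsh_def twisted_def sum_distrib_left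
    by (intro sum.cong refl) (simp only: mult_ac)
  finally show ?thesis .
qed

text \<open>Both \<i>-power factors collapse by power_i_coord_support_add, and the two signs
  Tr(y e) and Tr(y^(2^k) e^(2^k)) they leave behind coincide.\<close>
lemma autocorrelation_twisted:
  "autocorrelation (twisted t \<alpha> u k a) e
    = (-\<i>) ^ card (coord_support t \<alpha> e) * \<i> ^ card (coord_support t \<alpha> (e ^ (2 ^ k)))
      * sgn2 (Tr t (a * e ^ (2 ^ k))) * autocorrelation (\<lambda>y. sgn2 (u y)) e"
proof -
  let ?cs = "coord_support t \<alpha>" and ?e = "e ^ (2 ^ k)"
  have "twisted t \<alpha> u k a y * cnj (twisted t \<alpha> u k a (y + e))
      = (-\<i>) ^ card (?cs e) * \<i> ^ card (?cs ?e) * sgn2 (Tr t (a * ?e))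
        * (sgn2 (u y) * cnj (sgn2 (u (y + e))))" for y
  proof -
    let ?z = "y ^ (2 ^ k) + a"
    have shift: "(y + e) ^ (2 ^ k) + a = ?z + ?e"
      by (simp add: power_two_power_add ac_simps)
    have conj: "(-\<i>) ^ card (?cs ?z) * \<i> ^ card (?cs (?z + ?e)) = \<i> ^ card (?cs ?e) * sgn2 (Tr t (?z * ?e))"
      using arg_cong[OF power_i_coord_support_add[of ?z ?e], of cnj] by simp
    have "Tr t (?z * ?e) \<longleftrightarrow> Tr t ((y * e) ^ (2 ^ k) + a * ?e)"
      by (simp only: distrib_right power_mult_distrib)
    then have sign: "sgn2 (Tr t (?z * ?e)) = sgn2 (Tr t (y * e)) * sgn2 (Tr t (a * ?e))"
      by (simp only: Tr_add sgn2_xor Tr_power_two_power)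
    have "twisted t \<alpha> u k a y * cnj (twisted t \<alpha> u k a (y + e))
        = sgn2 (u y) * sgn2 (u (y + e)) * (\<i> ^ card (?cs y) * (-\<i>) ^ card (?cs (y + e)))
          * ((-\<i>) ^ card (?cs ?z) * \<i> ^ card (?cs (?z + ?e)))"
      unfolding twisted_def shift by (simp add: mult_ac)
    also have "\<dots> = sgn2 (u y) * sgn2 (u (y + e)) * ((-\<i>) ^ card (?cs e) * sgn2 (Tr t (y * e)))
          * (\<i> ^ card (?cs ?e) * (sgn2 (Tr t (y * e)) * sgn2 (Tr t (a * ?e))))"
      by (simp only: power_i_coord_support_add conj sign)
    also have "\<dots> = (-\<i>) ^ card (?cs e) * \<i> ^ card (?cs ?e) * sgn2 (Tr t (a * ?e))
        * (sgn2 (u y) * sgn2 (u (y + e))) * (sgn2 (Tr t (y * e)) * sgn2 (Tr t (y * e)))"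
      by (simp only: mult_ac)
    finally show ?thesis
      by simp
  qed
  then show ?thesis
    unfolding autocorrelation_def sum_distrib_left by simp
qed

lemma negabent_iff_bent:
  "negabent t \<alpha> (\<lambda>x y. Tr t (x * y ^ (2 ^ k)) \<noteq> u y) \<longleftrightarrow> bent t u"
proof -
  let ?F = "twisted t \<alpha> u k"
  have "negabent t \<alpha> (\<lambda>x y. Tr t (x * y ^ (2 ^ k)) \<noteq> u y)
      \<longleftrightarrow> (\<forall>a b. walsh t (?F a) b * cnj (walsh t (?F a) b) = 2 ^ t)"
    unfolding negabent_def negabent_sum_eq_walsh_twisted norm_mult_one_plus_i_power_eq_iff ..
  also have "\<dots> \<longleftrightarrow> (\<forall>a e. e \<noteq> 0 \<longrightarrow> autocorrelation (?F a) e = 0)"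
    by (simp add: flat_walsh_iff_autocorrelation_zero)
  also have "\<dots> \<longleftrightarrow> (\<forall>e. e \<noteq> 0 \<longrightarrow> autocorrelation (\<lambda>y. sgn2 (u y)) e = 0)"
    by (simp add: autocorrelation_twisted sgn2_def)
  also have "\<dots> \<longleftrightarrow> bent t u"
    by (simp add: bent_iff_autocorrelation_zero)
  finally show ?thesis .
qed

end

end

theorem theorem6:
  fixes t i :: nat and h :: "'a::{field,finite} \<Rightarrow> 'a" and \<alpha> :: "nat \<Rightarrow> 'a"
  assumes "t \<ge> 1" and "card (UNIV :: 'a set) = 2 ^ t"
    and "self_dual_basis t \<alpha>"
  shows "negabent t \<alpha> (\<lambda>x y. Tr t (x * y ^ (2 ^ i) + h y)) \<longleftrightarrow> bent t (\<lambda>y. Tr t (h y))"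
proof -
  have "(\<lambda>x y. Tr t (x * y ^ (2 ^ i) + h y)) = (\<lambda>x y. Tr t (x * y ^ (2 ^ i)) \<noteq> Tr t (h y))"
    using Tr_add[OF assms(2)] by simp
  then show ?thesis
    using negabent_iff_bent[OF assms(2,3)] by simp
qed

end
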